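(* For every positive integer $k$, any randomized distributed algorithm in the LOCAL model that, for every assignment of unique identifiers, finds a proper $4$-coloring of $G_k$ with success probability greater than $1/2$ requires at least $k$ rounds.
   Context: The planar graphs $G_k$ are defined inductively. $G_0$ has vertex set $\{v_{(0,1)},v_{(0,2)}\}$ and the single edge $\{v_{(0,1)},v_{(0,2)}\}$. For $i\ge 1$, $G_i$ is obtained from $G_{i-1}$ by adding, for each $j\in\{1,2\}$, four new vertices $a_{(i,j)},b_{(i,j)},c_{(i,j)},v_{(i,j)}$ and the edges $\{a_{(i,j)},b_{(i,j)}\},\{b_{(i,j)},c_{(i,j)}\},\{c_{(i,j)},a_{(i,j)}\}$, $\{a_{(i,j)},v_{(i,j)}\},\{b_{(i,j)},v_{(i,j)}\},\{c_{(i,j)},v_{(i,j)}\}$, $\{a_{(i,j)},v_{(i-1,j)}\},\{b_{(i,j)},v_{(i-1,j)}\},\{c_{(i,j)},v_{(i-1,j)}\}$. LOCAL model: the network is the graph, each vertex has a unique identifier, and in synchronous rounds each vertex receives the previous round's messages, computes arbitrarily (possibly using random bits) and sends messages of unbounded size to its neighbors; at the end each vertex outputs its color. A proper $4$-coloring assigns colors in $\{1,2,3,4\}$ with adjacent vertices colored differently. *)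

theory Defs
  imports "HOL-Probability.Probability"
begin

datatype vtx = Vv nat nat | Av nat nat | Bv nat nat | Cv nat nat

fun Gk_vertices :: "nat \<Rightarrow> vtx set" where
  "Gk_vertices 0 = {Vv 0 1, Vv 0 2}"
| "Gk_vertices (Suc i) = Gk_vertices i \<union>
     (\<Union>j\<in>{1,2::nat}. {Av (Suc i) j, Bv (Suc i) j, Cv (Suc i) j, Vv (Suc i) j})"

fun Gk_edges :: "nat \<Rightarrow> vtx set set" where
  "Gk_edges 0 = {{Vv 0 1, Vv 0 2}}"
| "Gk_edges (Suc i) = Gk_edges i \<union>
     (\<Union>j\<in>{1,2::nat}.
        {{Av (Suc i) j, Bv (Suc i) j}, {Bv (Suc i) j, Cv (Suc i) j}, {Cv (Suc i) j, Av (Suc i) j},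
         {Av (Suc i) j, Vv (Suc i) j}, {Bv (Suc i) j, Vv (Suc i) j}, {Cv (Suc i) j, Vv (Suc i) j},
         {Av (Suc i) j, Vv i j}, {Bv (Suc i) j, Vv i j}, {Cv (Suc i) j, Vv i j}})"

definition proper_coloring :: "'v set \<Rightarrow> 'v set set \<Rightarrow> nat \<Rightarrow> ('v \<Rightarrow> nat) \<Rightarrow> bool" where
  "proper_coloring V E q c \<longleftrightarrow>
     (\<forall>v\<in>V. c v \<in> {1..q}) \<and> (\<forall>u\<in>V. \<forall>w\<in>V. {u, w} \<in> E \<longrightarrow> c u \<noteq> c w)"

text \<open>A randomized LOCAL algorithm: every vertex draws an independent random seed from
  la_rand (arbitrary probability space), starts in state la_init (its identifier) seed;
  in round r every vertex sends the message la_send r (state) to all its neighbours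
  (messages of unbounded size), receives the multiset of messages of its neighbours and
  updates its state by la_step.\<close>
record ('r, 's, 'm) local_alg =
  la_rand :: "'r measure"
  la_init :: "nat \<Rightarrow> 'r \<Rightarrow> 's"
  la_send :: "nat \<Rightarrow> 's \<Rightarrow> 'm"
  la_step :: "nat \<Rightarrow> 's \<Rightarrow> 'm multiset \<Rightarrow> 's"
  la_output :: "'s \<Rightarrow> nat"
  la_rounds :: nat

fun local_state ::
  "('r, 's, 'm) local_alg \<Rightarrow> 'v set \<Rightarrow> 'v set set \<Rightarrow> ('v \<Rightarrow> nat) \<Rightarrow> ('v \<Rightarrow> 'r) \<Rightarrow> nat \<Rightarrow> 'v \<Rightarrow> 's"
where
  "local_state A V E idf \<rho> 0 v = la_init A (idf v) (\<rho> v)"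
| "local_state A V E idf \<rho> (Suc r) v =
     la_step A r (local_state A V E idf \<rho> r v)
       (image_mset (\<lambda>u. la_send A r (local_state A V E idf \<rho> r u))
          (mset_set {u \<in> V. {u, v} \<in> E}))"

definition local_output ::
  "('r, 's, 'm) local_alg \<Rightarrow> 'v set \<Rightarrow> 'v set set \<Rightarrow> ('v \<Rightarrow> nat) \<Rightarrow> ('v \<Rightarrow> 'r) \<Rightarrow> 'v \<Rightarrow> nat"
where
  "local_output A V E idf \<rho> v = la_output A (local_state A V E idf \<rho> (la_rounds A) v)"

definition success_prob ::
  "('r, 's, 'm) local_alg \<Rightarrow> 'v set \<Rightarrow> 'v set set \<Rightarrow> nat \<Rightarrow> ('v \<Rightarrow> nat) \<Rightarrow> real"
where
  "success_prob A V E q idf =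
     measure (PiM V (\<lambda>_. la_rand A))
       {\<rho> \<in> space (PiM V (\<lambda>_. la_rand A)). proper_coloring V E q (local_output A V E idf \<rho>)}"

end

theory Submission
  imports Defs
begin

text \<open>Suppose the algorithm runs \<open>t < k\<close> rounds. Give \<open>v(i,j)\<close> height \<open>2i\<close> and the triangle
  \<open>a(i,j), b(i,j), c(i,j)\<close> height \<open>2i - 1\<close>; an edge changes the height by at most one. Let \<open>\<sigma>\<close>
  exchange the branches \<open>j = 1\<close> and \<open>j = 2\<close> on the vertices of height at least \<open>t + 1\<close>, and
  compose both the identifiers and the random seeds with \<open>\<sigma>\<close>. Since exchanging the branches is an
  automorphism of \<open>G\<^sub>k\<close>, after \<open>t\<close> rounds \<open>v(k,1)\<close> is in the state that \<open>v(k,2)\<close> had in the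
  original run, whereas \<open>v(0,1)\<close>, whose \<open>t\<close>-neighbourhood lies below height \<open>t + 1\<close>, is in its old
  state. In a proper 4-colouring, \<open>v(i,j)\<close> and \<open>v(i-1,j)\<close> both avoid the three colours of the
  triangle between them, so \<open>v(k,j)\<close> has the colour of \<open>v(0,j)\<close>; as \<open>v(0,1)\<close> and \<open>v(0,2)\<close> are
  adjacent, the original and the modified run never both succeed. The modified seeds have the same
  distribution, so the two success probabilities sum to at most 1.\<close>

abbreviation neighbours :: "'v set \<Rightarrow> 'v set set \<Rightarrow> 'v \<Rightarrow> 'v set" where
  "neighbours V E v \<equiv> {u \<in> V. {u, v} \<in> E}"

lemma local_state_reindex:
  assumes init: "\<And>u. u \<in> V \<Longrightarrow> Q 0 u \<Longrightarrow> idf' u = idf (g u) \<and> \<rho>' u = \<rho> (g u)"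
    and down: "\<And>r u. u \<in> V \<Longrightarrow> Q (Suc r) u \<Longrightarrow> Q r u \<and> (\<forall>w \<in> neighbours V E u. Q r w)"
    and local_iso: "\<And>r u. u \<in> V \<Longrightarrow> Q (Suc r) u \<Longrightarrow>
      bij_betw g (neighbours V E u) (neighbours V E (g u))"
    and "u \<in> V" "Q r u"
  shows "local_state A V E idf' \<rho>' r u = local_state A V E idf \<rho> r (g u)"
  using \<open>u \<in> V\<close> \<open>Q r u\<close>
proof (induction r arbitrary: u)
  case 0
  then show ?case using init by simp
next
  case (Suc r)
  let ?N = "neighbours V E u"
  let ?msg = "\<lambda>idf \<rho> w. la_send A r (local_state A V E idf \<rho> r w)"
  have bij: "bij_betw g ?N (neighbours V E (g u))"
    using local_iso Suc.prems by blast
  have "image_mset (?msg idf' \<rho>') (mset_set ?N) = image_mset (?msg idf \<rho> \<circ> g) (mset_set ?N)"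
  proof (rule image_mset_cong)
    fix w assume "w \<in># mset_set ?N"
    then have "w \<in> ?N" by (cases "finite ?N") auto
    moreover from this have "Q r w"
      using down Suc.prems by blast
    ultimately show "?msg idf' \<rho>' w = (?msg idf \<rho> \<circ> g) w"
      using Suc.IH by simp
  qed
  also have "\<dots> = image_mset (?msg idf \<rho>) (image_mset g (mset_set ?N))"
    by (simp add: multiset.map_comp)
  also have "image_mset g (mset_set ?N) = mset_set (neighbours V E (g u))"
    using bij unfolding bij_betw_def by (simp add: image_mset_mset_set)
  moreover have "local_state A V E idf' \<rho>' r u = local_state A V E idf \<rho> r (g u)"
    using down Suc.IH Suc.prems by blast
  ultimately show ?case
    by simp
qed

lemma (in prob_space) prob_add_preimage_le_1:
  assumes T: "T \<in> measurable M M" "distr M M T = M"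
    and events: "S \<in> events" "S' \<in> events"
    and disjoint: "S \<inter> (T -` S' \<inter> space M) = {}"
  shows "prob S + prob S' \<le> 1"
proof -
  have preimage: "T -` S' \<inter> space M \<in> events"
    using T(1) events(2) by (rule measurable_sets)
  have "prob (T -` S' \<inter> space M) = prob S'"
    using measure_distr[OF T(1) events(2)] T(2) by simp
  then have "prob S + prob S' = prob (S \<union> (T -` S' \<inter> space M))"
    using finite_measure_Union[OF events(1) preimage disjoint] by simp
  also have "\<dots> \<le> 1" by (rule prob_le_1)
  finally show ?thesis .
qed

definition other_branch :: "nat \<Rightarrow> nat" where
  "other_branch j = (if j = 1 then 2 else if j = 2 then 1 else j)"

fun branch_swap :: "vtx \<Rightarrow> vtx" where
  "branch_swap (Vv i j) = Vv i (other_branch j)"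
| "branch_swap (Av i j) = Av i (other_branch j)"
| "branch_swap (Bv i j) = Bv i (other_branch j)"
| "branch_swap (Cv i j) = Cv i (other_branch j)"

fun vtx_height :: "vtx \<Rightarrow> nat" where
  "vtx_height (Vv i j) = 2 * i"
| "vtx_height (Av i j) = 2 * i - 1"
| "vtx_height (Bv i j) = 2 * i - 1"
| "vtx_height (Cv i j) = 2 * i - 1"

lemma branch_swap_branch_swap [simp]: "branch_swap (branch_swap u) = u"
  by (cases u) (auto simp: other_branch_def)

lemma vtx_height_branch_swap [simp]: "vtx_height (branch_swap u) = vtx_height u"
  by (cases u) auto

lemma Gk_vertices_iff:
  "u \<in> Gk_vertices k \<longleftrightarrow> (case u of
      Vv i j \<Rightarrow> i \<le> k \<and> j \<in> {1, 2}
    | Av i j \<Rightarrow> 1 \<le> i \<and> i \<le> k \<and> j \<in> {1, 2}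
    | Bv i j \<Rightarrow> 1 \<le> i \<and> i \<le> k \<and> j \<in> {1, 2}
    | Cv i j \<Rightarrow> 1 \<le> i \<and> i \<le> k \<and> j \<in> {1, 2})"
  by (induction k; cases u) (auto simp: le_Suc_eq)

lemma finite_Gk_vertices: "finite (Gk_vertices k)"
  by (induction k) auto

lemma branch_swap_in_Gk_vertices_iff [simp]:
  "branch_swap u \<in> Gk_vertices k \<longleftrightarrow> u \<in> Gk_vertices k"
  by (cases u) (auto simp: Gk_vertices_iff other_branch_def)

definition gadget_edges :: "nat \<Rightarrow> nat \<Rightarrow> vtx set set" where
  "gadget_edges i j =
     {{Av (Suc i) j, Bv (Suc i) j}, {Bv (Suc i) j, Cv (Suc i) j}, {Cv (Suc i) j, Av (Suc i) j},
      {Av (Suc i) j, Vv (Suc i) j}, {Bv (Suc i) j, Vv (Suc i) j}, {Cv (Suc i) j, Vv (Suc i) j},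
      {Av (Suc i) j, Vv i j}, {Bv (Suc i) j, Vv i j}, {Cv (Suc i) j, Vv i j}}"

lemma Gk_edges_Suc_gadgets:
  "Gk_edges (Suc i) = Gk_edges i \<union> gadget_edges i 1 \<union> gadget_edges i 2"
  unfolding gadget_edges_def by (simp only: Gk_edges.simps UN_insert UN_empty Un_empty_right Un_assoc)

lemma Gk_edges_mono: "i \<le> k \<Longrightarrow> Gk_edges i \<subseteq> Gk_edges k"
  by (rule lift_Suc_mono_le[of Gk_edges]) (unfold Gk_edges_Suc_gadgets, blast)

lemma gadget_edges_subset_Gk_edges:
  assumes "i < k" "j \<in> {1, 2}"
  shows "gadget_edges i j \<subseteq> Gk_edges k"
proof -
  have "gadget_edges i j \<subseteq> Gk_edges (Suc i)"
    using assms(2) unfolding Gk_edges_Suc_gadgets by blast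
  also have "\<dots> \<subseteq> Gk_edges k"
    using assms(1) by (intro Gk_edges_mono) simp
  finally show ?thesis .
qed

lemma root_edge_in_Gk_edges: "{Vv 0 1, Vv 0 2} \<in> Gk_edges k"
  by (induction k) auto

lemma branch_swap_Gk_edges: "e \<in> Gk_edges k \<Longrightarrow> branch_swap ` e \<in> Gk_edges k"
proof (induction k)
  case 0
  then show ?case by (auto simp: other_branch_def insert_commute)
next
  case (Suc k)
  from Suc.prems consider "e \<in> Gk_edges k" | j where "j \<in> {1, 2}" "e \<in> gadget_edges k j"
    unfolding Gk_edges_Suc_gadgets by blast
  then show ?case
  proof cases
    case 1
    then show ?thesis using Suc.IH Gk_edges_mono[of k "Suc k"] by auto
  next
    case 2
    have "image branch_swap ` gadget_edges k j = gadget_edges k (other_branch j)"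
      unfolding gadget_edges_def by (simp only: image_insert image_empty branch_swap.simps)
    then have "branch_swap ` e \<in> gadget_edges k (other_branch j)"
      using 2 by blast
    moreover have "other_branch j \<in> {1, 2}"
      using 2 by (auto simp: other_branch_def)
    ultimately show ?thesis
      using gadget_edges_subset_Gk_edges[of k "Suc k"] by blast
  qed
qed

lemma doubleton_branch_swap_in_Gk_edges_iff [simp]:
  "{branch_swap u, branch_swap w} \<in> Gk_edges k \<longleftrightarrow> {u, w} \<in> Gk_edges k"
  using branch_swap_Gk_edges[of "{u, w}" k] branch_swap_Gk_edges[of "{branch_swap u, branch_swap w}" k]
  by auto

lemma bij_betw_branch_swap_neighbours:
  "bij_betw branch_swap (neighbours (Gk_vertices k) (Gk_edges k) u)
     (neighbours (Gk_vertices k) (Gk_edges k) (branch_swap u))"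
  by (rule bij_betw_byWitness[where f' = branch_swap])
    (auto, metis branch_swap_branch_swap doubleton_branch_swap_in_Gk_edges_iff)

lemma vtx_height_Gk_edge:
  assumes "{u, w} \<in> Gk_edges k"
  shows "vtx_height w \<le> vtx_height u + 1"
proof -
  have "\<forall>e \<in> Gk_edges k. \<forall>u \<in> e. \<forall>w \<in> e. vtx_height w \<le> vtx_height u + 1"
  proof (induction k)
    case 0
    then show ?case by simp
  next
    case (Suc k)
    have "\<forall>e \<in> gadget_edges k j. \<forall>u \<in> e. \<forall>w \<in> e. vtx_height w \<le> vtx_height u + 1" for j
      by (simp add: gadget_edges_def)
    then show ?case
      using Suc.IH by (simp add: Gk_edges_Suc_gadgets)
  qed
  then show ?thesis
    using assms by (metis insertCI)
qed

definition swap_above :: "nat \<Rightarrow> vtx \<Rightarrow> vtx" where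
  "swap_above h u = (if h \<le> vtx_height u then branch_swap u else u)"

lemma inj_swap_above: "inj (swap_above h)"
  by (rule injI) (metis swap_above_def branch_swap_branch_swap vtx_height_branch_swap)

lemma swap_above_in_Gk_vertices: "u \<in> Gk_vertices k \<Longrightarrow> swap_above h u \<in> Gk_vertices k"
  by (simp add: swap_above_def)

lemma local_state_swap_above_high:
  assumes "u \<in> Gk_vertices k" "h + r \<le> vtx_height u"
  shows "local_state A (Gk_vertices k) (Gk_edges k)
           (idf \<circ> swap_above h) (\<lambda>v\<in>Gk_vertices k. \<rho> (swap_above h v)) r u
       = local_state A (Gk_vertices k) (Gk_edges k) idf \<rho> r (branch_swap u)"
  by (rule local_state_reindex[where Q = "\<lambda>r u. h + r \<le> vtx_height u"])
    (use assms in \<open>auto simp: swap_above_def bij_betw_branch_swap_neighbours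
      dest!: vtx_height_Gk_edge\<close>)

lemma local_state_swap_above_low:
  assumes "u \<in> Gk_vertices k" "vtx_height u + r < h"
  shows "local_state A (Gk_vertices k) (Gk_edges k)
           (idf \<circ> swap_above h) (\<lambda>v\<in>Gk_vertices k. \<rho> (swap_above h v)) r u
       = local_state A (Gk_vertices k) (Gk_edges k) idf \<rho> r u"
proof -
  have "local_state A (Gk_vertices k) (Gk_edges k)
          (idf \<circ> swap_above h) (\<lambda>v\<in>Gk_vertices k. \<rho> (swap_above h v)) r u
      = local_state A (Gk_vertices k) (Gk_edges k) idf \<rho> r (id u)"
    by (rule local_state_reindex[where Q = "\<lambda>r u. vtx_height u + r < h" and g = id])
      (use assms in \<open>auto simp: swap_above_def insert_commute dest!: vtx_height_Gk_edge\<close>)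
  then show ?thesis by simp
qed

lemma fourth_colour_unique:
  fixes x y z p q :: nat
  assumes "x \<in> {1..4}" "y \<in> {1..4}" "z \<in> {1..4}" "p \<in> {1..4}" "q \<in> {1..4}"
    and "x \<noteq> y" "y \<noteq> z" "z \<noteq> x" "p \<notin> {x, y, z}" "q \<notin> {x, y, z}"
  shows "p = q"
proof -
  have "card {x, y, z, p} = 4" using assms by simp
  moreover have "{x, y, z, p} \<subseteq> {1..4}" using assms by blast
  ultimately have "{x, y, z, p} = {1..4}"
    by (intro card_subset_eq) simp_all
  then show ?thesis using assms by blast
qed

lemma proper_coloring_Gk_spine:
  assumes colouring: "proper_coloring (Gk_vertices k) (Gk_edges k) 4 c"
    and "j \<in> {1, 2}" "i \<le> k"
  shows "c (Vv i j) = c (Vv 0 j)"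
  using \<open>i \<le> k\<close>
proof (induction i)
  case 0
  then show ?case by simp
next
  case (Suc i)
  let ?V = "Gk_vertices k" and ?E = "Gk_edges k"
  let ?a = "Av (Suc i) j" and ?b = "Bv (Suc i) j" and ?c = "Cv (Suc i) j"
  have edges: "{?a, ?b} \<in> ?E" "{?b, ?c} \<in> ?E" "{?c, ?a} \<in> ?E"
      "{?a, Vv (Suc i) j} \<in> ?E" "{?b, Vv (Suc i) j} \<in> ?E" "{?c, Vv (Suc i) j} \<in> ?E"
      "{?a, Vv i j} \<in> ?E" "{?b, Vv i j} \<in> ?E" "{?c, Vv i j} \<in> ?E"
    using gadget_edges_subset_Gk_edges[of i k j] Suc.prems \<open>j \<in> {1, 2}\<close>
    by (auto simp: gadget_edges_def)
  have in_V: "?a \<in> ?V" "?b \<in> ?V" "?c \<in> ?V" "Vv (Suc i) j \<in> ?V" "Vv i j \<in> ?V"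
    using Suc.prems \<open>j \<in> {1, 2}\<close> by (auto simp: Gk_vertices_iff)
  have colours: "c v \<in> {1..4}" if "v \<in> ?V" for v
    using colouring that by (simp add: proper_coloring_def)
  have differ: "c u \<noteq> c w" if "{u, w} \<in> ?E" "u \<in> ?V" "w \<in> ?V" for u w
    using colouring that by (simp add: proper_coloring_def)
  have triangle: "c ?a \<noteq> c ?b" "c ?b \<noteq> c ?c" "c ?c \<noteq> c ?a"
    and apexes: "c ?a \<noteq> c (Vv (Suc i) j)" "c ?b \<noteq> c (Vv (Suc i) j)" "c ?c \<noteq> c (Vv (Suc i) j)"
      "c ?a \<noteq> c (Vv i j)" "c ?b \<noteq> c (Vv i j)" "c ?c \<noteq> c (Vv i j)"
    by (rule differ; fact)+
  have "c (Vv (Suc i) j) = c (Vv i j)"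
    using triangle apexes in_V[THEN colours] by (intro fourth_colour_unique) auto
  then show ?case
    using Suc by simp
qed

lemma proper_coloring_Gk_roots:
  assumes "proper_coloring (Gk_vertices k) (Gk_edges k) 4 c"
  shows "c (Vv 0 1) \<noteq> c (Vv 0 2)"
  using assms root_edge_in_Gk_edges by (auto simp: proper_coloring_def Gk_vertices_iff)

lemma swap_above_runs_not_both_proper:
  fixes A :: "('r, 's, 'm) local_alg"
  assumes "la_rounds A < k"
    and proper: "proper_coloring (Gk_vertices k) (Gk_edges k) 4
      (local_output A (Gk_vertices k) (Gk_edges k) idf \<rho>)"
  shows "\<not> proper_coloring (Gk_vertices k) (Gk_edges k) 4
      (local_output A (Gk_vertices k) (Gk_edges k) (idf \<circ> swap_above (Suc (la_rounds A)))
        (\<lambda>v\<in>Gk_vertices k. \<rho> (swap_above (Suc (la_rounds A)) v)))"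
    (is "\<not> proper_coloring _ _ _ ?c'")
proof
  let ?c = "local_output A (Gk_vertices k) (Gk_edges k) idf \<rho>"
  assume proper': "proper_coloring (Gk_vertices k) (Gk_edges k) 4 ?c'"
  have top: "?c' (Vv k 1) = ?c (Vv k 2)"
    using local_state_swap_above_high[where A = A, of "Vv k 1" k "Suc (la_rounds A)" "la_rounds A"]
      assms(1)
    by (simp add: local_output_def Gk_vertices_iff other_branch_def)
  have bottom: "?c' (Vv 0 1) = ?c (Vv 0 1)"
    using local_state_swap_above_low[where A = A, of "Vv 0 1" k "la_rounds A" "Suc (la_rounds A)"]
    by (simp add: local_output_def Gk_vertices_iff)
  have "?c (Vv 0 1) = ?c' (Vv k 1)"
    using bottom proper_coloring_Gk_spine[OF proper', of 1 k] by simp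
  also have "\<dots> = ?c (Vv 0 2)"
    using top proper_coloring_Gk_spine[OF proper, of 2 k] by simp
  finally show False
    using proper_coloring_Gk_roots[OF proper] by contradiction
qed

theorem lemma6p6:
  fixes k :: nat and A :: "('r, 's, 'm) local_alg"
  assumes "1 \<le> k"
    and "prob_space (la_rand A)"
    and "\<forall>idf. inj_on idf (Gk_vertices k) \<longrightarrow>
           success_prob A (Gk_vertices k) (Gk_edges k) 4 idf > 1/2"
  shows "k \<le> la_rounds A"
proof (rule ccontr)
  assume "\<not> k \<le> la_rounds A"
  let ?V = "Gk_vertices k" and ?E = "Gk_edges k"
  define \<sigma> where "\<sigma> = swap_above (Suc (la_rounds A))"
  define M where "M = PiM ?V (\<lambda>_. la_rand A)"
  define T where "T = (\<lambda>\<rho> :: vtx \<Rightarrow> 'r. \<lambda>v\<in>?V. \<rho> (\<sigma> v))"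
  define success where
    "success idf = {\<rho> \<in> space M. proper_coloring ?V ?E 4 (local_output A ?V ?E idf \<rho>)}" for idf
  interpret prob_space M
    unfolding M_def using assms(2) by (intro prob_space_PiM) auto
  have \<sigma>: "inj_on \<sigma> ?V" "\<sigma> \<in> ?V \<rightarrow> ?V"
    unfolding \<sigma>_def using inj_swap_above swap_above_in_Gk_vertices by (auto intro: inj_on_subset)
  obtain idf :: "vtx \<Rightarrow> nat" where idf: "inj_on idf ?V"
    using finite_imp_inj_to_nat_seg[OF finite_Gk_vertices] by blast
  then have "inj_on (idf \<circ> \<sigma>) ?V"
    using \<sigma> by (intro comp_inj_on) (auto intro: inj_on_subset)
  then have likely: "prob (success idf) > 1/2" "prob (success (idf \<circ> \<sigma>)) > 1/2"
    using assms(3) idf unfolding success_def M_def success_prob_def by blast+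
  \<comment> \<open>a set outside \<open>sets M\<close> has measure 0\<close>
  then have "success idf \<in> events" "success (idf \<circ> \<sigma>) \<in> events"
    using measure_notin_sets by force+
  moreover have "T \<in> measurable M M" "distr M M T = M"
    unfolding T_def M_def using \<sigma> assms(2)
    by (auto intro!: measurable_restrict measurable_component_singleton distr_PiM_reindex)
  moreover have "success idf \<inter> (T -` success (idf \<circ> \<sigma>) \<inter> space M) = {}"
    using swap_above_runs_not_both_proper[of A k idf] \<open>\<not> k \<le> la_rounds A\<close>
    unfolding success_def T_def \<sigma>_def by auto
  ultimately have "prob (success idf) + prob (success (idf \<circ> \<sigma>)) \<le> 1"
    by (intro prob_add_preimage_le_1)
  with likely show False by simp
qed

end
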